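(* Let $A,B\in M_n(\mathbb{R}_+)$ be simultaneously triangularizable. Then their characteristic polynomial $P_{A,B}(z)$ is a product of $n$ linear factors, i.e. there exist $\alpha_i,\beta_i\ge 0$ ($i=1,\dots,n$) with $P_{A,B}(z)=\prod_{i=1}^n(1\oplus\alpha_i z_1\oplus\beta_i z_2)$ for all $z_1,z_2\ge0$.
   Context: Max algebra: $\mathbb{R}_+$ the nonnegative reals with $a\oplus b=\max\{a,b\}$ and ordinary multiplication; for matrices, $(AB)_{ij}=\max_k a_{ik}b_{kj}$ and $(A\oplus B)_{ij}=\max\{a_{ij},b_{ij}\}$. $GL_n(\mathbb{R}_+)$ is the set of matrices invertible under this product (the generalized permutation matrices); $A,B$ are simultaneously triangularizable if one $P\in GL_n(\mathbb{R}_+)$ makes both $P^{-1}AP$ and $P^{-1}BP$ upper triangular. The tropical determinant of $M=(m_{ij})$ is $\mathrm{tdet}(M)=\max_{\sigma\in S_n}\prod_{i=1}^n m_{i\sigma(i)}$. For $z=(z_1,z_2)$ with $z_1,z_2\ge0$, let $M(z)=I\oplus(z_1A)\oplus(z_2B)$, where $I$ is the identity matrix ($1$ on the diagonal, $0$ elsewhere); the characteristic polynomial of the pair is $P_{A,B}(z)=\mathrm{tdet}(M(z))$. *)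

theory Defs
  imports "HOL-Analysis.Analysis" "HOL-Combinatorics.Permutations"
begin

text \<open>Square n x n matrices over the max algebra R_+ are represented as functions
  nat => nat => real; only entries with indices < n are relevant.\<close>

type_synonym mat = "nat \<Rightarrow> nat \<Rightarrow> real"

definition nonneg_mat :: "nat \<Rightarrow> mat \<Rightarrow> bool" where
  "nonneg_mat n A \<longleftrightarrow> (\<forall>i<n. \<forall>j<n. A i j \<ge> 0)"

definition maxmult :: "nat \<Rightarrow> mat \<Rightarrow> mat \<Rightarrow> mat" where
  "maxmult n A B = (\<lambda>i j. if i < n \<and> j < n then Max ((\<lambda>k. A i k * B k j) ` {0..<n}) else 0)"

definition maxadd :: "mat \<Rightarrow> mat \<Rightarrow> mat" where
  "maxadd A B = (\<lambda>i j. max (A i j) (B i j))"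

definition scal :: "real \<Rightarrow> mat \<Rightarrow> mat" where
  "scal c A = (\<lambda>i j. c * A i j)"

definition idm :: "nat \<Rightarrow> mat" where
  "idm n = (\<lambda>i j. if i < n \<and> j < n \<and> i = j then 1 else 0)"

definition restr :: "nat \<Rightarrow> mat \<Rightarrow> mat" where
  "restr n A = (\<lambda>i j. if i < n \<and> j < n then A i j else 0)"

definition maxGL :: "nat \<Rightarrow> mat \<Rightarrow> bool" where
  "maxGL n P \<longleftrightarrow> nonneg_mat n P \<and>
     (\<exists>Q. nonneg_mat n Q \<and> maxmult n P Q = idm n \<and> maxmult n Q P = idm n)"

definition upper_tri :: "nat \<Rightarrow> mat \<Rightarrow> bool" where
  "upper_tri n A \<longleftrightarrow> (\<forall>i<n. \<forall>j<n. j < i \<longrightarrow> A i j = 0)"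

definition simul_triang :: "nat \<Rightarrow> mat \<Rightarrow> mat \<Rightarrow> bool" where
  "simul_triang n A B \<longleftrightarrow>
     (\<exists>P Q. nonneg_mat n P \<and> nonneg_mat n Q \<and>
        maxmult n P Q = idm n \<and> maxmult n Q P = idm n \<and>
        upper_tri n (maxmult n (maxmult n Q A) P) \<and>
        upper_tri n (maxmult n (maxmult n Q B) P))"

definition tdet :: "nat \<Rightarrow> mat \<Rightarrow> real" where
  "tdet n M = Max ((\<lambda>\<sigma>. \<Prod>i<n. M i (\<sigma> i)) ` {\<sigma>. \<sigma> permutes {..<n}})"

definition charpoly2 :: "nat \<Rightarrow> mat \<Rightarrow> mat \<Rightarrow> real \<Rightarrow> real \<Rightarrow> real" where
  "charpoly2 n A B z1 z2 = tdet n (maxadd (idm n) (maxadd (scal z1 A) (scal z2 B)))"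

end

theory Submission
  imports Defs
begin

text \<open>If \<open>P\<close> is max-invertible with inverse \<open>Q\<close>, the diagonal of \<open>P Q = I\<close> yields for every \<open>i\<close>
  an index \<open>\<pi> i\<close> with \<open>P i (\<pi> i) > 0\<close> and \<open>Q (\<pi> i) i > 0\<close>, and the off-diagonal zeros force \<open>\<pi>\<close>
  to be injective. As all entries are nonnegative, \<open>(Q A P) (\<pi> a) (\<pi> b) \<ge> Q (\<pi> a) a * A a b * P b (\<pi> b)\<close>,
  so triangularity of \<open>Q A P\<close> makes \<open>A\<close> triangular with respect to the order on indices
  pulled back along \<open>\<pi>\<close>; the same holds for \<open>B\<close> and hence for \<open>I \<oplus> z\<^sub>1 A \<oplus> z\<^sub>2 B\<close>.
  Every permutation other than the identity moves some index down in this order and so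
  picks up a zero entry; thus the tropical determinant is the product of the diagonal
  entries \<open>1 \<oplus> a\<^sub>i\<^sub>i z\<^sub>1 \<oplus> b\<^sub>i\<^sub>i z\<^sub>2\<close>.\<close>

definition upper_tri_wrt :: "nat \<Rightarrow> (nat \<Rightarrow> nat) \<Rightarrow> mat \<Rightarrow> bool" where
  "upper_tri_wrt n \<pi> M \<longleftrightarrow> (\<forall>a<n. \<forall>b<n. \<pi> b < \<pi> a \<longrightarrow> M a b = 0)"

lemma upper_tri_wrt_idm: "upper_tri_wrt n \<pi> (idm n)"
  by (auto simp: upper_tri_wrt_def idm_def)

lemma upper_tri_wrt_scal: "upper_tri_wrt n \<pi> M \<Longrightarrow> upper_tri_wrt n \<pi> (scal c M)"
  by (simp add: upper_tri_wrt_def scal_def)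

lemma upper_tri_wrt_maxadd:
  "upper_tri_wrt n \<pi> M \<Longrightarrow> upper_tri_wrt n \<pi> N \<Longrightarrow> upper_tri_wrt n \<pi> (maxadd M N)"
  by (simp add: upper_tri_wrt_def maxadd_def)

lemma permutes_exists_descent:
  fixes f :: "'a \<Rightarrow> nat"
  assumes perm: "\<tau> permutes S" and "finite S" and inj: "inj_on f S" and "\<exists>a\<in>S. \<tau> a \<noteq> a"
  shows "\<exists>a\<in>S. \<tau> a \<noteq> a \<and> f (\<tau> a) < f a"
proof -
  define moved where "moved = {a\<in>S. \<tau> a \<noteq> a}"
  have "finite moved" "moved \<noteq> {}" using assms by (auto simp: moved_def)
  then have "Max (f ` moved) \<in> f ` moved" by simp
  then obtain a where "a \<in> moved" and a_max: "f a = Max (f ` moved)" by auto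
  then have a: "a \<in> S" "\<tau> a \<noteq> a" by (auto simp: moved_def)
  then have "\<tau> a \<in> S" using perm by (simp add: permutes_in_image)
  moreover have "\<tau> (\<tau> a) \<noteq> \<tau> a" using a permutes_inj[OF perm] by (metis injD)
  ultimately have "f (\<tau> a) \<le> f a" using a_max \<open>finite moved\<close> by (simp add: moved_def)
  moreover have "f (\<tau> a) \<noteq> f a" using inj \<open>\<tau> a \<in> S\<close> a by (metis inj_on_def)
  ultimately show ?thesis using a by auto
qed

lemma tdet_upper_tri_wrt:
  assumes inj: "inj_on \<pi> {..<n}" and tri: "upper_tri_wrt n \<pi> M"
    and diag_nonneg: "\<forall>i<n. M i i \<ge> 0"
  shows "tdet n M = (\<Prod>i<n. M i i)"
  unfolding tdet_def
proof (rule Max_eqI)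
  show "finite ((\<lambda>\<sigma>. \<Prod>i<n. M i (\<sigma> i)) ` {\<sigma>. \<sigma> permutes {..<n}})"
    by (simp add: finite_permutations)
  show "(\<Prod>i<n. M i i) \<in> (\<lambda>\<sigma>. \<Prod>i<n. M i (\<sigma> i)) ` {\<sigma>. \<sigma> permutes {..<n}}"
    by (rule image_eqI[where x = id]) (auto simp: permutes_id)
next
  fix y assume "y \<in> (\<lambda>\<sigma>. \<Prod>i<n. M i (\<sigma> i)) ` {\<sigma>. \<sigma> permutes {..<n}}"
  then obtain \<tau> where \<tau>: "\<tau> permutes {..<n}" and y: "y = (\<Prod>i<n. M i (\<tau> i))" by auto
  show "y \<le> (\<Prod>i<n. M i i)"
  proof (cases "\<exists>a\<in>{..<n}. \<tau> a \<noteq> a")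
    case True
    then obtain a where a: "a < n" and "\<pi> (\<tau> a) < \<pi> a"
      using permutes_exists_descent[OF \<tau> _ inj] by auto
    moreover have "\<tau> a < n" using \<tau> a by (auto dest: permutes_in_image)
    ultimately have "M a (\<tau> a) = 0" using tri by (simp add: upper_tri_wrt_def)
    then have "y = 0" using a y by (auto intro: prod_zero)
    then show ?thesis using diag_nonneg by (auto intro: prod_nonneg)
  next
    case False
    then show ?thesis using y by simp
  qed
qed

lemma maxmult_ge:
  assumes "i < n" "j < n" "k < n"
  shows "maxmult n X Y i j \<ge> X i k * Y k j"
  using assms unfolding maxmult_def by (auto intro: Max_ge)

lemma maxmult_eq_idm_obtains_support_perm:
  assumes nP: "nonneg_mat n P" and nQ: "nonneg_mat n Q" and PQ: "maxmult n P Q = idm n"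
  obtains \<pi> where "inj_on \<pi> {..<n}"
    and "\<And>i. i < n \<Longrightarrow> \<pi> i < n \<and> P i (\<pi> i) > 0 \<and> Q (\<pi> i) i > 0"
proof -
  have "\<exists>k<n. P i k > 0 \<and> Q k i > 0" if i: "i < n" for i
  proof -
    let ?diag = "(\<lambda>k. P i k * Q k i) ` {0..<n}"
    have "Max ?diag = 1"
      using fun_cong[OF fun_cong[OF PQ, of i], of i] i by (simp add: maxmult_def idm_def)
    moreover have "Max ?diag \<in> ?diag" using i by (intro Max_in) auto
    ultimately have "1 \<in> ?diag" by simp
    then obtain k where k: "k < n" and one: "P i k * Q k i = 1" by auto
    have "P i k \<ge> 0" "Q k i \<ge> 0" using nP nQ i k by (auto simp: nonneg_mat_def)
    moreover have "P i k \<noteq> 0" "Q k i \<noteq> 0" using one by auto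
    ultimately show ?thesis using k by (auto simp: less_le)
  qed
  then have "\<forall>i. \<exists>k. i < n \<longrightarrow> k < n \<and> P i k > 0 \<and> Q k i > 0" by blast
  then obtain \<pi> where \<pi>: "\<And>i. i < n \<Longrightarrow> \<pi> i < n \<and> P i (\<pi> i) > 0 \<and> Q (\<pi> i) i > 0"
    by (metis choice)
  have "inj_on \<pi> {..<n}"
  proof (rule inj_onI, rule ccontr)
    fix i j assume ij: "i \<in> {..<n}" "j \<in> {..<n}" "\<pi> i = \<pi> j" "i \<noteq> j"
    then have "maxmult n P Q i j = 0" using PQ by (simp add: idm_def)
    moreover have "maxmult n P Q i j \<ge> P i (\<pi> i) * Q (\<pi> i) j"
      using ij \<pi>[of i] by (intro maxmult_ge) auto
    moreover have "P i (\<pi> i) * Q (\<pi> i) j > 0" using ij \<pi>[of i] \<pi>[of j] by auto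
    ultimately show False by linarith
  qed
  then show thesis using \<pi> by (rule that)
qed

lemma upper_tri_conj_imp_upper_tri_wrt:
  assumes nA: "nonneg_mat n A"
    and \<pi>: "\<And>i. i < n \<Longrightarrow> \<pi> i < n \<and> P i (\<pi> i) > 0 \<and> Q (\<pi> i) i > 0"
    and tri: "upper_tri n (maxmult n (maxmult n Q A) P)"
  shows "upper_tri_wrt n \<pi> A"
  unfolding upper_tri_wrt_def
proof (intro allI impI)
  fix a b assume a: "a < n" and b: "b < n" and lt: "\<pi> b < \<pi> a"
  have \<pi>a: "\<pi> a < n" "Q (\<pi> a) a > 0" and \<pi>b: "\<pi> b < n" "P b (\<pi> b) > 0"
    using \<pi> a b by auto
  have "Q (\<pi> a) a * A a b * P b (\<pi> b) \<le> maxmult n Q A (\<pi> a) b * P b (\<pi> b)"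
    using \<pi>a \<pi>b a b by (intro mult_right_mono maxmult_ge) auto
  also have "\<dots> \<le> maxmult n (maxmult n Q A) P (\<pi> a) (\<pi> b)"
    using \<pi>a \<pi>b b by (intro maxmult_ge)
  also have "\<dots> = 0" using tri \<pi>a \<pi>b lt by (simp add: upper_tri_def)
  finally have "A a b \<le> 0" using \<pi>a \<pi>b by (simp add: mult_le_0_iff zero_less_mult_iff)
  moreover have "A a b \<ge> 0" using nA a b by (simp add: nonneg_mat_def)
  ultimately show "A a b = 0" by simp
qed

theorem theorem3p20:
  fixes n :: nat and A B :: mat
  assumes "nonneg_mat n A" and "nonneg_mat n B"
    and "simul_triang n A B"
  shows "\<exists>\<alpha> \<beta> :: nat \<Rightarrow> real. (\<forall>i<n. \<alpha> i \<ge> 0 \<and> \<beta> i \<ge> 0) \<and>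
           (\<forall>z1 z2. z1 \<ge> 0 \<longrightarrow> z2 \<ge> 0 \<longrightarrow>
              charpoly2 n A B z1 z2 = (\<Prod>i<n. max 1 (max (\<alpha> i * z1) (\<beta> i * z2))))"
proof -
  obtain P Q where nP: "nonneg_mat n P" and nQ: "nonneg_mat n Q" and PQ: "maxmult n P Q = idm n"
    and triA: "upper_tri n (maxmult n (maxmult n Q A) P)"
    and triB: "upper_tri n (maxmult n (maxmult n Q B) P)"
    using assms(3) unfolding simul_triang_def by blast
  obtain \<pi> where inj: "inj_on \<pi> {..<n}"
    and \<pi>: "\<And>i. i < n \<Longrightarrow> \<pi> i < n \<and> P i (\<pi> i) > 0 \<and> Q (\<pi> i) i > 0"
    using maxmult_eq_idm_obtains_support_perm[OF nP nQ PQ] by blast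
  have tri: "upper_tri_wrt n \<pi> (maxadd (idm n) (maxadd (scal z1 A) (scal z2 B)))" for z1 z2
    using upper_tri_conj_imp_upper_tri_wrt[OF assms(1) \<pi> triA]
      upper_tri_conj_imp_upper_tri_wrt[OF assms(2) \<pi> triB]
    by (intro upper_tri_wrt_maxadd upper_tri_wrt_scal upper_tri_wrt_idm)
  have "charpoly2 n A B z1 z2 = (\<Prod>i<n. max 1 (max (A i i * z1) (B i i * z2)))" for z1 z2
    using tdet_upper_tri_wrt[OF inj tri]
    by (simp add: charpoly2_def maxadd_def idm_def scal_def mult.commute le_max_iff_disj)
  moreover have "\<forall>i<n. A i i \<ge> 0 \<and> B i i \<ge> 0"
    using assms(1,2) by (simp add: nonneg_mat_def)
  ultimately show ?thesis by (intro exI[of _ "\<lambda>i. A i i"] exI[of _ "\<lambda>i. B i i"]) simp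
qed

end
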